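(* Let $\Phi:\mathbb{R}^N\to\mathbb{R}^M$ and $L:\mathbb{R}^P\to\mathbb{R}^N$ be linear operators, let $\|\cdot\|_A$ be a norm on $\mathbb{R}^P$ with dual norm $\|\cdot\|_A^*$, and set $R(x)=\|L^*x\|_A$. Let $y\in\mathbb{R}^M$, $\lambda>0$, and let $x^\star$ be a minimizer of $\min_{x\in\mathbb{R}^N}\tfrac12\|y-\Phi x\|_2^2+\lambda R(x)$. Assume $\|\cdot\|_A$ is decomposable at $u^\star=L^*x^\star$ with associated subspace $T$ and vector $e\in T$, let $S=T^\perp$, and assume moreover that $\|\cdot\|_A$ is separable on $S=V\oplus W$ for subspaces $V,W$. Assume that there exist $\eta\in\mathbb{R}^M$ and $\alpha\in\partial\|\cdot\|_A(L^*x^\star)$ with $\Phi^*\eta=L\alpha$ and $\|\alpha_V\|_A^*<1$, and that $\Phi$ is injective on $\ker(L_V^* )$. Then $x^\star$ is the unique minimizer of this problem.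
   Context: For a subspace $V\subset\mathbb{R}^P$, $P_V$ denotes the orthogonal projector onto $V$, and $L_V=LP_V$, $L_V^*=P_VL^*$, $\alpha_V=P_V\alpha$ for $\alpha\in\mathbb{R}^P$. A norm $\|\cdot\|_A$ on $\mathbb{R}^P$ is decomposable at $u\in\mathbb{R}^P$ if (i) there exist a subspace $T\subset\mathbb{R}^P$ and a vector $e\in T$ such that $\partial\|\cdot\|_A(u)=\{\alpha\in\mathbb{R}^P:\ \alpha_T=e,\ \|\alpha_{T^\perp}\|_A^*\le 1\}$, and (ii) for every $z\in T^\perp$, $\|z\|_A=\sup\{\langle v,z\rangle: v\in T^\perp,\ \|v\|_A^*\le 1\}$. The decomposable norm is separable on $T^\perp=S=V\oplus W$ if $\|u_{T^\perp}\|_A=\|u_V\|_A+\|u_W\|_A$ for all $u\in\mathbb{R}^P$. *)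

theory Defs
  imports "HOL-Analysis.Analysis"
begin

definition orth_comp :: "('a::real_inner) set \<Rightarrow> 'a set" where
  "orth_comp V = {x. \<forall>v\<in>V. x \<bullet> v = 0}"

definition proj :: "('a::real_inner) set \<Rightarrow> 'a \<Rightarrow> 'a" where
  "proj V x = (THE p. p \<in> V \<and> (\<forall>v\<in>V. (x - p) \<bullet> v = 0))"

definition is_norm :: "('a::real_vector \<Rightarrow> real) \<Rightarrow> bool" where
  "is_norm nA \<longleftrightarrow> (\<forall>x. nA x = 0 \<longleftrightarrow> x = 0)
     \<and> (\<forall>c x. nA (c *\<^sub>R x) = \<bar>c\<bar> * nA x)
     \<and> (\<forall>x y. nA (x + y) \<le> nA x + nA y)"

definition dual_norm :: "('a::real_inner \<Rightarrow> real) \<Rightarrow> 'a \<Rightarrow> real" where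
  "dual_norm nA v = Sup {v \<bullet> z | z. nA z \<le> 1}"

definition subdiff :: "('a::real_inner \<Rightarrow> real) \<Rightarrow> 'a \<Rightarrow> 'a set" where
  "subdiff f u = {a. \<forall>z. f u + a \<bullet> (z - u) \<le> f z}"

definition decomposable_at :: "('a::real_inner \<Rightarrow> real) \<Rightarrow> 'a \<Rightarrow> 'a set \<Rightarrow> 'a \<Rightarrow> bool" where
  "decomposable_at nA u T e \<longleftrightarrow> subspace T \<and> e \<in> T
     \<and> subdiff nA u = {a. proj T a = e \<and> dual_norm nA (proj (orth_comp T) a) \<le> 1}
     \<and> (\<forall>z\<in>orth_comp T. nA z = Sup {v \<bullet> z | v. v \<in> orth_comp T \<and> dual_norm nA v \<le> 1})"

definition separable_on :: "('a::real_inner \<Rightarrow> real) \<Rightarrow> 'a set \<Rightarrow> 'a set \<Rightarrow> 'a set \<Rightarrow> bool" where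
  "separable_on nA T V W \<longleftrightarrow> subspace V \<and> subspace W
     \<and> (\<forall>v\<in>V. \<forall>w\<in>W. v \<bullet> w = 0)
     \<and> orth_comp T = {v + w | v w. v \<in> V \<and> w \<in> W}
     \<and> (\<forall>u. nA (proj (orth_comp T) u) = nA (proj V u) + nA (proj W u))"

end

theory Submission
  imports Defs
begin

text \<open>
  Two minimizers x and xs have the same image under Phi: the data-fidelity term is strictly
  convex in Phi x, so otherwise their midpoint would do strictly better. Hence h = x - xs lies
  in ker Phi, R(x) = R(xs), and the certificate gives <alpha, L^* h> = <eta, Phi h> = 0.
  Decomposability lets one replace the S-part of alpha by any v in the dual unit ball of S
  and stay in the subdifferential; the supremum over v then gives, with g = L^* h,
  ||P_S g||_A <= <P_S alpha, g> <= ||alpha_V||_A^* ||g_V||_A + ||g_W||_A,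
  while separability splits the left-hand side as ||g_V||_A + ||g_W||_A.
  As ||alpha_V||_A^* < 1 this forces g_V = 0, and injectivity of Phi on ker L_V^* gives h = 0.
\<close>

lemma is_norm_zero: "is_norm nA \<Longrightarrow> nA 0 = 0"
  by (simp add: is_norm_def)

lemma is_norm_eq_0_iff: "is_norm nA \<Longrightarrow> nA x = 0 \<longleftrightarrow> x = 0"
  by (simp add: is_norm_def)

lemma is_norm_scaleR: "is_norm nA \<Longrightarrow> nA (c *\<^sub>R x) = \<bar>c\<bar> * nA x"
  by (simp add: is_norm_def)

lemma is_norm_triangle: "is_norm nA \<Longrightarrow> nA (x + y) \<le> nA x + nA y"
  by (simp add: is_norm_def)

lemma is_norm_minus: "is_norm nA \<Longrightarrow> nA (- x) = nA x"
  using is_norm_scaleR[of nA "-1" x] by simp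

lemma is_norm_nonneg:
  assumes "is_norm nA"
  shows "nA x \<ge> 0"
  using is_norm_triangle[OF assms, of x "- x"] is_norm_zero[OF assms] is_norm_minus[OF assms]
  by simp

lemma is_norm_sum_le:
  assumes "is_norm nA"
  shows "nA (sum f A) \<le> (\<Sum>i\<in>A. nA (f i))"
proof (induction A rule: infinite_finite_induct)
  case (insert a A)
  then show ?case using is_norm_triangle[OF assms, of "f a" "sum f A"] by simp
qed (simp_all add: is_norm_zero[OF assms])

lemma is_norm_le_norm:
  fixes nA :: "'a::euclidean_space \<Rightarrow> real"
  assumes "is_norm nA"
  shows "nA x \<le> (\<Sum>i\<in>Basis. nA i) * norm x"
proof -
  have "nA x = nA (\<Sum>i\<in>Basis. (x \<bullet> i) *\<^sub>R i)"
    by (simp add: euclidean_representation)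
  also have "\<dots> \<le> (\<Sum>i\<in>Basis. nA ((x \<bullet> i) *\<^sub>R i))"
    by (rule is_norm_sum_le[OF assms])
  also have "\<dots> = (\<Sum>i\<in>Basis. \<bar>x \<bullet> i\<bar> * nA i)"
    by (simp add: is_norm_scaleR[OF assms])
  also have "\<dots> \<le> (\<Sum>i\<in>Basis. norm x * nA i)"
    by (intro sum_mono mult_right_mono) (auto simp: Basis_le_norm is_norm_nonneg[OF assms])
  finally show ?thesis
    by (simp add: sum_distrib_left mult.commute)
qed

lemma is_norm_lipschitz:
  fixes nA :: "'a::euclidean_space \<Rightarrow> real"
  assumes "is_norm nA"
  shows "(\<Sum>i\<in>Basis. nA i)-lipschitz_on S nA"
proof (rule lipschitz_onI)
  fix x y :: 'a
  have "nA x \<le> nA y + nA (x - y)" "nA y \<le> nA x + nA (x - y)"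
    using is_norm_triangle[OF assms, of y "x - y"] is_norm_triangle[OF assms, of x "y - x"]
      is_norm_minus[OF assms, of "x - y"] by simp_all
  then show "dist (nA x) (nA y) \<le> (\<Sum>i\<in>Basis. nA i) * dist x y"
    using is_norm_le_norm[OF assms, of "x - y"] by (simp add: dist_real_def dist_norm abs_le_iff)
qed (simp add: sum_nonneg is_norm_nonneg[OF assms])

lemma is_norm_ge_norm:
  fixes nA :: "'a::euclidean_space \<Rightarrow> real"
  assumes "is_norm nA"
  obtains c where "c > 0" "\<And>x. c * norm x \<le> nA x"
proof -
  obtain b :: 'a where "b \<in> Basis" using nonempty_Basis by blast
  then have "sphere (0::'a) 1 \<noteq> {}" by (auto simp: norm_Basis)
  then obtain x0 where x0: "x0 \<in> sphere 0 1" "\<And>x. x \<in> sphere 0 1 \<Longrightarrow> nA x0 \<le> nA x"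
    using continuous_attains_inf[OF compact_sphere _ lipschitz_on_continuous_on[OF is_norm_lipschitz[OF assms]]]
    by blast
  have pos: "nA x0 > 0"
    using x0(1) is_norm_nonneg[OF assms, of x0] is_norm_eq_0_iff[OF assms, of x0] by auto
  have "nA x0 * norm x \<le> nA x" for x
  proof (cases "x = 0")
    case False
    then have "nA x0 \<le> nA (inverse (norm x) *\<^sub>R x)" by (intro x0(2)) simp
    with False show ?thesis by (simp add: is_norm_scaleR[OF assms] field_simps)
  qed (simp add: is_norm_nonneg[OF assms])
  with pos show ?thesis using that by blast
qed

lemma convex_on_is_norm_comp_linear:
  assumes norm: "is_norm nA" and f: "linear f"
  shows "convex_on UNIV (\<lambda>x. nA (f x))"
proof (rule convex_onI)
  fix t :: real and x y assume "0 < t" "t < 1"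
  then have "nA ((1 - t) *\<^sub>R f x + t *\<^sub>R f y) \<le> (1 - t) * nA (f x) + t * nA (f y)"
    using is_norm_triangle[OF norm] by (metis is_norm_scaleR[OF norm] abs_of_pos diff_gt_0_iff_gt)
  then show "nA (f ((1 - t) *\<^sub>R x + t *\<^sub>R y)) \<le> (1 - t) * nA (f x) + t * nA (f y)"
    by (simp add: linear_add[OF f] linear_scale[OF f])
qed simp

lemma dual_norm_zero:
  assumes "is_norm nA"
  shows "dual_norm nA 0 = 0"
proof -
  have "{(0::'a) \<bullet> z | z. nA z \<le> 1} = {0}"
    using is_norm_zero[OF assms] by (auto intro!: exI[of _ 0])
  then show ?thesis unfolding dual_norm_def by simp
qed

lemma inner_le_dual_norm:
  fixes nA :: "'a::euclidean_space \<Rightarrow> real"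
  assumes "is_norm nA"
  shows "v \<bullet> z \<le> dual_norm nA v * nA z"
proof -
  obtain c where c: "c > 0" "\<And>x. c * norm x \<le> nA x" using is_norm_ge_norm[OF assms] by blast
  have "bdd_above {v \<bullet> z | z. nA z \<le> 1}"
  proof (rule bdd_aboveI, clarify)
    fix z assume "nA z \<le> 1"
    then have "norm z \<le> 1 / c" using c(1) c(2)[of z] by (simp add: field_simps)
    then show "v \<bullet> z \<le> norm v / c"
      using Cauchy_Schwarz_ineq2[of v z] mult_left_mono[of "norm z" "1 / c" "norm v"] by simp
  qed
  then have unit_ball: "v \<bullet> w \<le> dual_norm nA v" if "nA w \<le> 1" for w
    unfolding dual_norm_def using that by (intro cSup_upper) blast+
  show ?thesis
  proof (cases "z = 0")
    case True
    then show ?thesis using unit_ball[of 0] by (simp add: is_norm_zero[OF assms])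
  next
    case False
    then have pos: "nA z > 0"
      using is_norm_nonneg[OF assms, of z] is_norm_eq_0_iff[OF assms, of z] by linarith
    then have "v \<bullet> (inverse (nA z) *\<^sub>R z) \<le> dual_norm nA v"
      by (intro unit_ball) (simp add: is_norm_scaleR[OF assms])
    with pos show ?thesis by (simp add: field_simps)
  qed
qed

lemma subspace_orth_comp: "subspace (orth_comp T)"
  unfolding subspace_def orth_comp_def by (auto simp: inner_add_left)

lemma proj_eqI:
  fixes V :: "'a::real_inner set"
  assumes "subspace V" "p \<in> V" "\<And>v. v \<in> V \<Longrightarrow> (x - p) \<bullet> v = 0"
  shows "proj V x = p"
  unfolding proj_def
proof (rule the_equality)
  show "p \<in> V \<and> (\<forall>v\<in>V. (x - p) \<bullet> v = 0)" using assms by blast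
  fix q assume q: "q \<in> V \<and> (\<forall>v\<in>V. (x - q) \<bullet> v = 0)"
  then have "p - q \<in> V" using assms(1,2) by (simp add: subspace_diff)
  moreover have "(p - q) \<bullet> (p - q) = (x - q) \<bullet> (p - q) - (x - p) \<bullet> (p - q)"
    by (simp add: inner_diff_left)
  ultimately have "(p - q) \<bullet> (p - q) = 0"
    using q assms(3) by simp
  then show "q = p" by simp
qed

lemma proj_in_orthogonal:
  fixes V :: "'a::euclidean_space set"
  assumes "subspace V"
  shows proj_in: "proj V x \<in> V"
    and proj_orthogonal: "v \<in> V \<Longrightarrow> (x - proj V x) \<bullet> v = 0"
proof -
  obtain p q where pq: "p \<in> span V" "\<And>w. w \<in> span V \<Longrightarrow> orthogonal q w" "x = p + q"
    using orthogonal_subspace_decomp_exists[of V x] by blast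
  have "span V = V" using assms by simp
  with pq have "proj V x = p"
    using assms by (intro proj_eqI) (auto simp: orthogonal_def)
  with pq \<open>span V = V\<close> show "proj V x \<in> V" "v \<in> V \<Longrightarrow> (x - proj V x) \<bullet> v = 0"
    by (auto simp: orthogonal_def)
qed

lemma proj_zero:
  assumes "subspace V"
  shows "proj V 0 = 0"
  using assms by (intro proj_eqI) (simp_all add: subspace_0)

lemma inner_proj_left:
  fixes V :: "'a::euclidean_space set"
  assumes "subspace V" "v \<in> V"
  shows "proj V x \<bullet> v = x \<bullet> v"
  using proj_orthogonal[OF assms] by (simp add: inner_diff_left)

lemma proj_orthogonal_sum:
  fixes V W :: "'a::euclidean_space set"
  assumes "subspace V" "subspace W" "\<And>v w. v \<in> V \<Longrightarrow> w \<in> W \<Longrightarrow> v \<bullet> w = 0"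
    and S: "S = {v + w | v w. v \<in> V \<and> w \<in> W}"
  shows "proj S x = proj V x + proj W x"
proof (rule proj_eqI)
  show "subspace S" unfolding S using subspace_sums[OF assms(1,2)] by (simp add: set_plus_def)
  show "proj V x + proj W x \<in> S" unfolding S using proj_in assms(1,2) by blast
  fix s assume "s \<in> S"
  then obtain v w where s: "s = v + w" "v \<in> V" "w \<in> W" unfolding S by blast
  have "proj V x \<bullet> w = 0" "proj W x \<bullet> v = 0"
    using assms(3)[OF proj_in[OF assms(1)] s(3)] assms(3)[OF s(2) proj_in[OF assms(2)]]
    by (simp_all add: inner_commute)
  then show "(x - (proj V x + proj W x)) \<bullet> s = 0"
    using inner_proj_left[OF assms(1) s(2), of x] inner_proj_left[OF assms(2) s(3), of x]
    by (simp add: s inner_add_right inner_diff_left inner_add_left)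
qed

lemma decomposable_at_increment_lower_bound:
  fixes nA :: "'a::euclidean_space \<Rightarrow> real"
  assumes norm: "is_norm nA" and decomp: "decomposable_at nA u T e"
    and alpha: "alpha \<in> subdiff nA u"
  defines "S \<equiv> orth_comp T"
  shows "nA (proj S h) \<le> nA (u + h) - nA u - alpha \<bullet> h + proj S alpha \<bullet> h"
proof -
  have T: "subspace T" "e \<in> T"
    and subdiff_eq: "subdiff nA u = {a. proj T a = e \<and> dual_norm nA (proj S a) \<le> 1}"
    and sup_eq: "\<And>z. z \<in> S \<Longrightarrow> nA z = Sup {v \<bullet> z | v. v \<in> S \<and> dual_norm nA v \<le> 1}"
    using decomp unfolding decomposable_at_def S_def by auto
  have S: "subspace S" unfolding S_def by (rule subspace_orth_comp)
  have "v \<bullet> proj S h \<le> nA (u + h) - nA u - alpha \<bullet> h + proj S alpha \<bullet> h"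
    if v: "v \<in> S" "dual_norm nA v \<le> 1" for v
  proof -
    define a where "a = alpha - proj S alpha + v"
    have "proj S a = v"
      using v(1) proj_orthogonal[OF S] by (intro proj_eqI[OF S]) (simp_all add: a_def)
    moreover have "proj T a = e"
    proof (rule proj_eqI[OF T])
      fix t assume "t \<in> T"
      moreover have "proj S alpha - v \<in> S" by (rule subspace_diff[OF S proj_in[OF S] v(1)])
      ultimately have "(proj S alpha - v) \<bullet> t = 0" by (simp add: S_def orth_comp_def)
      moreover have "(alpha - e) \<bullet> t = 0"
        using proj_orthogonal[OF T(1) \<open>t \<in> T\<close>, of alpha] alpha subdiff_eq by simp
      ultimately show "(a - e) \<bullet> t = 0"
        by (simp add: a_def inner_diff_left inner_add_left)
    qed
    ultimately have "a \<in> subdiff nA u" using subdiff_eq v(2) by simp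
    then have "nA u + a \<bullet> ((u + h) - u) \<le> nA (u + h)"
      unfolding subdiff_def by blast
    moreover have "v \<bullet> h = v \<bullet> proj S h"
      using inner_proj_left[OF S v(1), of h] by (simp add: inner_commute)
    ultimately show ?thesis
      by (simp add: a_def inner_diff_left inner_add_left)
  qed
  then have "Sup {v \<bullet> proj S h | v. v \<in> S \<and> dual_norm nA v \<le> 1}
      \<le> nA (u + h) - nA u - alpha \<bullet> h + proj S alpha \<bullet> h"
  proof (intro cSup_least)
    have "0 \<in> S" "dual_norm nA 0 \<le> 1"
      using subspace_0[OF S] dual_norm_zero[OF norm] by simp_all
    then show "{v \<bullet> proj S h | v. v \<in> S \<and> dual_norm nA v \<le> 1} \<noteq> {}" by blast
  qed blast
  then show ?thesis using sup_eq[OF proj_in[OF S]] by simp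
qed

lemma separable_on_inner_le:
  fixes nA :: "'a::euclidean_space \<Rightarrow> real"
  assumes norm: "is_norm nA" and sep: "separable_on nA T V W"
    and dual_S: "dual_norm nA (proj (orth_comp T) a) \<le> 1"
  shows "proj (orth_comp T) a \<bullet> h \<le> dual_norm nA (proj V a) * nA (proj V h) + nA (proj W h)"
proof -
  define S where "S = orth_comp T"
  have S: "subspace S" unfolding S_def by (rule subspace_orth_comp)
  have V: "subspace V" and W: "subspace W"
    and VW: "\<And>v w. v \<in> V \<Longrightarrow> w \<in> W \<Longrightarrow> v \<bullet> w = 0"
    and split: "\<And>x. proj S x = proj V x + proj W x"
    using sep proj_orthogonal_sum[of V W S] unfolding separable_on_def S_def by auto
  have "proj S a \<bullet> h = proj S a \<bullet> (proj V h + proj W h)"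
    using inner_proj_left[OF S proj_in[OF S], of h a] by (simp add: split[of h] inner_commute)
  also have "\<dots> = proj S a \<bullet> proj V h + proj S a \<bullet> proj W h"
    by (simp add: inner_add_right)
  also have "proj S a \<bullet> proj V h = proj V a \<bullet> proj V h"
    using VW[OF proj_in[OF V] proj_in[OF W], of h a]
    by (simp add: split[of a] inner_add_left inner_add_right inner_commute)
  also have "\<dots> \<le> dual_norm nA (proj V a) * nA (proj V h)"
    by (rule inner_le_dual_norm[OF norm])
  also have "proj S a \<bullet> proj W h \<le> dual_norm nA (proj S a) * nA (proj W h)"
    by (rule inner_le_dual_norm[OF norm])
  also have "\<dots> \<le> nA (proj W h)"
    using mult_right_mono[OF dual_S is_norm_nonneg[OF norm]] by (simp add: S_def)
  finally show ?thesis by (simp add: S_def)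
qed

lemma minimizers_same_image:
  fixes A :: "'a::real_vector \<Rightarrow> 'b::real_inner" and g :: "'a \<Rightarrow> real" and y :: 'b
  defines "F \<equiv> \<lambda>z. (1/2) * (norm (y - A z))\<^sup>2 + g z"
  assumes A: "linear A" and g: "convex_on UNIV g"
    and min_x: "\<forall>z. F x \<le> F z" and min_x': "\<forall>z. F x' \<le> F z"
  shows "A x = A x'"
proof -
  define m where "m = (1 - 1/2) *\<^sub>R x + (1/2) *\<^sub>R x'"
  define a where "a = y - A x"
  define b where "b = y - A x'"
  have "y - A m = (1/2) *\<^sub>R (a + b)"
    by (simp add: m_def a_def b_def linear_add[OF A] linear_scale[OF A] algebra_simps)
      (simp flip: scaleR_add_left)
  moreover have "(norm ((1/2) *\<^sub>R (a + b)))\<^sup>2 = ((norm a)\<^sup>2 + (norm b)\<^sup>2) / 2 - (norm (a - b))\<^sup>2 / 4"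
    by (simp add: power2_norm_eq_inner inner_add_left inner_add_right inner_diff_left
        inner_diff_right inner_commute field_simps)
  moreover have "g m \<le> (g x + g x') / 2"
    using convex_onD[OF g, of "1/2" x x'] by (simp add: m_def)
  ultimately have "F m \<le> (F x + F x') / 2 - (norm (a - b))\<^sup>2 / 8"
    unfolding F_def a_def b_def by (simp add: field_simps)
  then have "(norm (a - b))\<^sup>2 \<le> 0"
    using min_x[rule_format, of m] min_x'[rule_format, of m] by argo
  then show ?thesis by (simp add: a_def b_def)
qed

lemma decomposable_separable_proj_eq_0:
  fixes nA :: "'a::euclidean_space \<Rightarrow> real"
  assumes norm: "is_norm nA" and decomp: "decomposable_at nA u T e"
    and sep: "separable_on nA T V W"
    and alpha: "alpha \<in> subdiff nA u" and dual_V: "dual_norm nA (proj V alpha) < 1"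
    and level: "nA (u + h) = nA u" and orth: "alpha \<bullet> h = 0"
  shows "proj V h = 0"
proof -
  have "dual_norm nA (proj (orth_comp T) alpha) \<le> 1"
    using decomp alpha unfolding decomposable_at_def by auto
  moreover have "nA (proj (orth_comp T) h) = nA (proj V h) + nA (proj W h)"
    using sep unfolding separable_on_def by blast
  ultimately have "nA (proj V h) + nA (proj W h)
      \<le> dual_norm nA (proj V alpha) * nA (proj V h) + nA (proj W h)"
    using decomposable_at_increment_lower_bound[OF norm decomp alpha, of h]
      separable_on_inner_le[OF norm sep, of alpha h] level orth by simp
  then have "(1 - dual_norm nA (proj V alpha)) * nA (proj V h) \<le> 0"
    by (simp add: algebra_simps)
  with dual_V have "nA (proj V h) \<le> 0" by (simp add: mult_le_0_iff)
  then show ?thesis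
    using is_norm_nonneg[OF norm, of "proj V h"] is_norm_eq_0_iff[OF norm] by fastforce
qed

lemma inner_transpose_matrix_vector:
  fixes A :: "real^'n^'m"
  shows "y \<bullet> (transpose A *v x) = (A *v y) \<bullet> x"
  using dot_lmul_matrix[of x A y] by (simp add: inner_commute)

theorem corollary2:
  fixes Phi :: "real^'n^'m" and L :: "real^'p^'n"
    and nA :: "real^'p \<Rightarrow> real"
    and y :: "real^'m" and lambda :: real and xs :: "real^'n"
    and T V W :: "(real^'p) set" and e :: "real^'p"
  defines "J \<equiv> (\<lambda>x. (1/2) * (norm (y - Phi *v x))\<^sup>2 + lambda * nA (transpose L *v x))"
  assumes norm: "is_norm nA"
    and lam: "lambda > 0"
    and minim: "\<forall>x. J xs \<le> J x"
    and decomp: "decomposable_at nA (transpose L *v xs) T e"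
    and sep: "separable_on nA T V W"
    and cert: "\<exists>eta alpha. alpha \<in> subdiff nA (transpose L *v xs)
                 \<and> transpose Phi *v eta = L *v alpha
                 \<and> dual_norm nA (proj V alpha) < 1"
    and inj: "inj_on (\<lambda>x. Phi *v x) {x. proj V (transpose L *v x) = 0}"
  shows "\<forall>x. (\<forall>z. J x \<le> J z) \<longrightarrow> x = xs"
proof (intro allI impI)
  fix x assume min_x: "\<forall>z. J x \<le> J z"
  obtain eta alpha where alpha: "alpha \<in> subdiff nA (transpose L *v xs)"
    and eta: "transpose Phi *v eta = L *v alpha" and dual_V: "dual_norm nA (proj V alpha) < 1"
    using cert by blast
  define h where "h = x - xs"
  have "convex_on UNIV (\<lambda>z. lambda * nA (transpose L *v z))"
    using lam by (intro convex_on_cmul convex_on_is_norm_comp_linear[OF norm matrix_vector_mul_linear]) auto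
  then have same_image: "Phi *v x = Phi *v xs"
    using minimizers_same_image[OF matrix_vector_mul_linear] min_x minim unfolding J_def by blast
  moreover have "J x = J xs"
    using min_x minim by (simp add: order_antisym)
  ultimately have "nA (transpose L *v x) = nA (transpose L *v xs)"
    using lam unfolding J_def by simp
  moreover have "transpose L *v xs + transpose L *v h = transpose L *v x"
    unfolding h_def matrix_vector_right_distrib[symmetric] by simp
  ultimately have level: "nA (transpose L *v xs + transpose L *v h) = nA (transpose L *v xs)"
    by simp
  have ker: "Phi *v h = 0"
    using same_image by (simp add: h_def matrix_vector_mult_diff_distrib)
  have "alpha \<bullet> (transpose L *v h) = eta \<bullet> (Phi *v h)"
    using inner_transpose_matrix_vector[of alpha L h] inner_transpose_matrix_vector[of h Phi eta] eta
    by (simp add: inner_commute)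
  with ker have "proj V (transpose L *v h) = 0"
    using decomposable_separable_proj_eq_0[OF norm decomp sep alpha dual_V level] by simp
  moreover have "subspace V"
    using sep unfolding separable_on_def by blast
  ultimately have "h = 0"
    using inj_onD[OF inj, of h 0] ker by (simp add: proj_zero)
  then show "x = xs" by (simp add: h_def)
qed

end
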